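(* There exist an open interval $A\subset\mathbb R$ of length strictly larger than $2$ and a smooth ($C^\infty$) function $\psi:A\to\mathbb C$ which is a regular $\mathbb C$-supershift on $A$ but is not real analytic on $A$.
   Context: For an open interval $A\subset\mathbb R$ of length $R>2$ (possibly infinite), set $\mathbb A=\{(a,a')\in\mathbb R\times A:\ a'+[-1,1]\subset A,\ a+a'\in A\}$. For a sequence $\boldsymbol\epsilon=(\epsilon_N)_{N\ge1}$ with $\epsilon_N\in[0,1)$ and $\epsilon_N\to0$, put $h^{\boldsymbol\epsilon}_{N,\nu}=1-2\,\frac{\nu+\epsilon_N(N-\nu)}{N}$ for $0\le\nu\le N$. For a continuous $\psi:A\to\mathbb C$ and $(a,a')\in\mathbb A$ set $$S_N^{\boldsymbol\epsilon}[\psi](a,a')=\sum_{\nu=0}^N\binom N\nu\Big(\frac{1+a}2\Big)^{N-\nu}\Big(\frac{1-a}2\Big)^{\nu}\psi\big(a'+h^{\boldsymbol\epsilon}_{N,\nu}\big).$$ A continuous $\psi:A\to\mathbb C$ is called a regular $\mathbb C$-supershift on $A$ if (1) for every such sequence $\boldsymbol\epsilon$, $S_N^{\boldsymbol\epsilon}[\psi](a,a')\to\psi(a+a')$ as $N\to\infty$ uniformly on compact subsets of $\mathbb A$; and (2) for every family $\{\boldsymbol\epsilon_{\iota'}=(\epsilon_{\iota',N})_{N\ge1}:\iota'\in I'\}$ of such sequences with $\sup_{\iota'\in I'}\epsilon_{\iota',N}\to0$ as $N\to\infty$, the convergence in (1) is uniform with respect to $\iota'\in I'$ on each compact subset of $\mathbb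 A$. *)

theory Defs
  imports "HOL-Analysis.Analysis"
begin

definition open_interval_gt2 :: "real set \<Rightarrow> bool" where
  "open_interval_gt2 A \<longleftrightarrow> open A \<and> is_interval A \<and> (\<exists>x\<in>A. \<exists>y\<in>A. y - x > 2)"

definition adm_pairs :: "real set \<Rightarrow> (real \<times> real) set" where
  "adm_pairs A = {(a, a'). a' \<in> A \<and> {a' - 1 .. a' + 1} \<subseteq> A \<and> a + a' \<in> A}"

text \<open>Admissible sequences epsilon (index 0 is irrelevant, only N \<ge> 1 is used).\<close>
definition adm_eps :: "(nat \<Rightarrow> real) \<Rightarrow> bool" where
  "adm_eps e \<longleftrightarrow> (\<forall>N. 0 \<le> e N \<and> e N < 1) \<and> e \<longlonglongrightarrow> 0"

definition h_eps :: "(nat \<Rightarrow> real) \<Rightarrow> nat \<Rightarrow> nat \<Rightarrow> real" where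
  "h_eps e N \<nu> = 1 - 2 * ((real \<nu> + e N * (real N - real \<nu>)) / real N)"

definition S_eps :: "(nat \<Rightarrow> real) \<Rightarrow> (real \<Rightarrow> complex) \<Rightarrow> nat \<Rightarrow> real \<Rightarrow> real \<Rightarrow> complex" where
  "S_eps e \<psi> N a a' =
     (\<Sum>\<nu>=0..N. of_real (real (N choose \<nu>) * ((1 + a) / 2) ^ (N - \<nu>) * ((1 - a) / 2) ^ \<nu>)
                 * \<psi> (a' + h_eps e N \<nu>))"

definition regular_supershift :: "real set \<Rightarrow> (real \<Rightarrow> complex) \<Rightarrow> bool" where
  "regular_supershift A \<psi> \<longleftrightarrow>
     continuous_on A \<psi> \<and>
     (\<forall>e. adm_eps e \<longrightarrow>
        (\<forall>K. compact K \<and> K \<subseteq> adm_pairs A \<longrightarrow>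
           uniform_limit K (\<lambda>N (a, a'). S_eps e \<psi> N a a') (\<lambda>(a, a'). \<psi> (a + a')) sequentially)) \<and>
     (\<forall>F :: (nat \<Rightarrow> real) set.
        (\<forall>e\<in>F. adm_eps e) \<and> (\<forall>\<delta>>0. \<forall>\<^sub>F N in sequentially. \<forall>e\<in>F. e N \<le> \<delta>) \<longrightarrow>
        (\<forall>K. compact K \<and> K \<subseteq> adm_pairs A \<longrightarrow>
           (\<forall>\<delta>>0. \<forall>\<^sub>F N in sequentially. \<forall>e\<in>F. \<forall>(a, a')\<in>K.
               norm (S_eps e \<psi> N a a' - \<psi> (a + a')) < \<delta>)))"

definition smooth_on_real :: "real set \<Rightarrow> (real \<Rightarrow> complex) \<Rightarrow> bool" where
  "smooth_on_real A \<psi> \<longleftrightarrow>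
     (\<exists>D :: nat \<Rightarrow> real \<Rightarrow> complex. (\<forall>x\<in>A. D 0 x = \<psi> x) \<and>
        (\<forall>n. \<forall>x\<in>A. (D n has_vector_derivative D (Suc n) x) (at x)))"

definition real_analytic_on :: "real set \<Rightarrow> (real \<Rightarrow> complex) \<Rightarrow> bool" where
  "real_analytic_on A \<psi> \<longleftrightarrow>
     (\<forall>x0\<in>A. \<exists>r>0. \<exists>c :: nat \<Rightarrow> complex. \<forall>x. \<bar>x - x0\<bar> < r \<longrightarrow>
        x \<in> A \<and> (\<lambda>n. c n * of_real ((x - x0) ^ n)) sums \<psi> x)"

end

theory Submission
  imports Defs "HOL-Computational_Algebra.Polynomial" "HOL-Complex_Analysis.Complex_Analysis"
begin

(*
  The witness is the smooth step psi x = phi (x - 1/2) / (phi (x - 1/2) + phi (3/2 - x)) on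
  A = (0, 2.01), where phi x = exp (-1/x) for x > 0 and phi x = 0 otherwise.  It is C-infinity
  because it lies in an algebra of functions that is closed under differentiation, and it is not
  real analytic at 1/2 because it vanishes to the left of 1/2 but not to the right.

  With q = (1 - a)/2, S_N psi (a, a') is the Bernstein average of psi at the nodes a' + h_nu.
  For |a| <= 1 the weights form a probability distribution, so the Lipschitz bound and the second
  moment of the nodes about a + a' = a' + 1 - 2q give the error L (N^(-1/2) + 2 eps_N).
  Admissibility forces 1 < a' < 1.01, hence otherwise 1 < |a| < 1.01; then psi takes its constant
  value (1 resp. 0) at a + a' and at all nodes outside one fifth of the indices, and the absolute
  weight of that fifth is at most ((32 |q| + |1 - q|)/2)^N <= (3/5)^N.  Both bounds depend on the
  sequence eps only through eps_N and are uniform in (a, a'), which gives both clauses of the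
  definition of a regular supershift.
*)

section \<open>The flat function and the algebra it generates\<close>

lemma poly_times_exp_neg_tendsto_0: "((\<lambda>y. poly p y * exp (-y)) \<longlongrightarrow> (0::real)) at_top"
proof -
  have "((\<lambda>y. \<Sum>i\<le>degree p. coeff p i * (y ^ i / exp y)) \<longlongrightarrow> 0) at_top"
    by (intro tendsto_null_sum tendsto_mult_right_zero tendsto_power_div_exp_0)
  moreover have "(\<Sum>i\<le>degree p. coeff p i * (y ^ i / exp y)) = poly p y * exp (-y)" for y :: real
    by (simp add: poly_altdef exp_minus divide_inverse sum_distrib_right mult.assoc)
  ultimately show ?thesis by simp
qed

fun flat_poly :: "nat \<Rightarrow> real poly" where
  "flat_poly 0 = 1"
| "flat_poly (Suc n) = [:0, 0, 1:] * (flat_poly n - pderiv (flat_poly n))"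

text \<open>The \<open>n\<close>-th derivative of the flat function \<open>exp (-1/x)\<close> (extended by \<open>0\<close> to \<open>x \<le> 0\<close>).\<close>

definition flat_deriv :: "nat \<Rightarrow> real \<Rightarrow> real" where
  "flat_deriv n x = (if x > 0 then poly (flat_poly n) (1/x) * exp (-1/x) else 0)"

lemma flat_deriv_0: "flat_deriv 0 x = (if x > 0 then exp (-1/x) else 0)"
  by (simp add: flat_deriv_def)

lemma flat_deriv_formula_has_derivative:
  assumes "x > 0"
  shows "((\<lambda>x. poly (flat_poly n) (1/x) * exp (-1/x)) has_real_derivative
           poly (flat_poly (Suc n)) (1/x) * exp (-1/x)) (at x)"
proof -
  have "((\<lambda>x. poly (flat_poly n) (1/x) * exp (-1/x)) has_real_derivative
          poly (pderiv (flat_poly n)) (1/x) * (- 1 / x^2) * exp (-1/x)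
            + poly (flat_poly n) (1/x) * (exp (-1/x) * (1 / x^2))) (at x)"
    using assms by (auto intro!: derivative_eq_intros simp: power2_eq_square field_simps)
  then show ?thesis
    by (simp add: algebra_simps power2_eq_square divide_inverse)
qed

lemma flat_deriv_has_derivative_at_0: "(flat_deriv n has_real_derivative 0) (at 0)"
proof -
  have "((\<lambda>h. (flat_deriv n h - flat_deriv n 0) / h) \<longlongrightarrow> 0) (at_left 0)"
    by (rule tendsto_eventually) (auto simp: eventually_at_filter flat_deriv_def)
  moreover have "((\<lambda>h. (flat_deriv n h - flat_deriv n 0) / h) \<longlongrightarrow> 0) (at_right 0)"
  proof -
    have "((\<lambda>y. (flat_deriv n (inverse y) - flat_deriv n 0) / inverse y) \<longlongrightarrow> 0) at_top"
    proof (rule Lim_transform_eventually[OF poly_times_exp_neg_tendsto_0[of "[:0, 1:] * flat_poly n"]])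
      show "\<forall>\<^sub>F y in at_top. poly ([:0, 1:] * flat_poly n) y * exp (- y)
              = (flat_deriv n (inverse y) - flat_deriv n 0) / inverse y"
        using eventually_gt_at_top[of "0::real"]
        by eventually_elim (simp add: flat_deriv_def field_simps)
    qed
    then show ?thesis
      by (simp add: filterlim_at_right_to_top)
  qed
  ultimately show ?thesis
    by (simp add: has_field_derivative_iff filterlim_at_split)
qed

lemma flat_deriv_has_derivative: "(flat_deriv n has_real_derivative flat_deriv (Suc n) x) (at x)"
proof -
  consider "x > 0" | "x < 0" | "x = 0" by linarith
  then show ?thesis
  proof cases
    case 1
    have ev: "\<forall>\<^sub>F y in nhds x. poly (flat_poly n) (1/y) * exp (-1/y) = flat_deriv n y"
      using eventually_nhds_in_open[of "{0<..}" x] 1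
      by (auto elim!: eventually_mono simp: flat_deriv_def)
    show ?thesis
      using DERIV_cong_ev[OF refl ev refl] flat_deriv_formula_has_derivative[OF 1, of n] 1
      unfolding flat_deriv_def[of "Suc n"] by simp
  next
    case 2
    have ev: "\<forall>\<^sub>F y in nhds x. 0 = flat_deriv n y"
      using eventually_nhds_in_open[of "{..<0}" x] 2
      by (auto elim!: eventually_mono simp: flat_deriv_def)
    show ?thesis
      using DERIV_cong_ev[OF refl ev refl] 2 DERIV_const[of 0 "at x"]
      by (simp add: flat_deriv_def[of "Suc n"])
  next
    case 3
    then show ?thesis
      using flat_deriv_has_derivative_at_0 by (simp add: flat_deriv_def)
  qed
qed

lemma flat_deriv_affine_has_derivative:
  "((\<lambda>x. flat_deriv n (c + s * x)) has_real_derivative s * flat_deriv (Suc n) (c + s * x)) (at x)"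
proof -
  have "((\<lambda>x. c + s * x) has_real_derivative s) (at x)"
    by (auto intro!: derivative_eq_intros)
  from DERIV_chain2[OF flat_deriv_has_derivative this] show ?thesis
    by (simp add: mult.commute)
qed

inductive_set flat_algebra :: "(real \<Rightarrow> real) set" where
  flat: "(\<lambda>x. flat_deriv n (c + s * x)) \<in> flat_algebra"
| const: "(\<lambda>x. c) \<in> flat_algebra"
| add: "f \<in> flat_algebra \<Longrightarrow> g \<in> flat_algebra \<Longrightarrow> (\<lambda>x. f x + g x) \<in> flat_algebra"
| mult: "f \<in> flat_algebra \<Longrightarrow> g \<in> flat_algebra \<Longrightarrow> (\<lambda>x. f x * g x) \<in> flat_algebra"
| inverse: "f \<in> flat_algebra \<Longrightarrow> \<forall>x. f x \<noteq> 0 \<Longrightarrow> (\<lambda>x. inverse (f x)) \<in> flat_algebra"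

lemma flat_algebra_has_derivative:
  "f \<in> flat_algebra \<Longrightarrow> \<exists>f'\<in>flat_algebra. \<forall>x. (f has_real_derivative f' x) (at x)"
proof (induction rule: flat_algebra.induct)
  case (flat n c s)
  have "(\<lambda>x. s * flat_deriv (Suc n) (c + s * x)) \<in> flat_algebra"
    by (rule flat_algebra.mult[OF flat_algebra.const flat_algebra.flat])
  with flat_deriv_affine_has_derivative[of n c s] show ?case
    by (intro bexI[of _ "\<lambda>x. s * flat_deriv (Suc n) (c + s * x)"]) auto
next
  case (const c)
  show ?case
    by (intro bexI[OF _ flat_algebra.const[of 0]]) auto
next
  case (add f g)
  then obtain f' g' where f': "f' \<in> flat_algebra" "\<forall>x. (f has_real_derivative f' x) (at x)"
    and g': "g' \<in> flat_algebra" "\<forall>x. (g has_real_derivative g' x) (at x)"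
    by blast
  have "((\<lambda>x. f x + g x) has_real_derivative f' x + g' x) (at x)" for x
    using DERIV_add[OF f'(2)[rule_format] g'(2)[rule_format]] .
  then show ?case
    using f' g' by (intro bexI[of _ "\<lambda>x. f' x + g' x"] flat_algebra.add) auto
next
  case (mult f g)
  then obtain f' g' where f': "f' \<in> flat_algebra" "\<forall>x. (f has_real_derivative f' x) (at x)"
    and g': "g' \<in> flat_algebra" "\<forall>x. (g has_real_derivative g' x) (at x)"
    by blast
  have "((\<lambda>x. f x * g x) has_real_derivative f' x * g x + f x * g' x) (at x)" for x
    using DERIV_mult[OF f'(2)[rule_format] g'(2)[rule_format]] by (simp add: mult.commute)
  moreover have "(\<lambda>x. f' x * g x + f x * g' x) \<in> flat_algebra"
    using f' g' mult.hyps by (intro flat_algebra.add flat_algebra.mult)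
  ultimately show ?case
    by (intro bexI[of _ "\<lambda>x. f' x * g x + f x * g' x"]) auto
next
  case (inverse f)
  then obtain f' where f': "f' \<in> flat_algebra" "\<forall>x. (f has_real_derivative f' x) (at x)"
    by blast
  have "((\<lambda>x. inverse (f x)) has_real_derivative
          (- 1) * f' x * (inverse (f x) * inverse (f x))) (at x)" for x
    using DERIV_inverse_fun[of f "f' x" x UNIV] f' inverse.hyps
    by (simp add: power2_eq_square inverse_mult_distrib)
  moreover have "(\<lambda>x. (- 1) * f' x * (inverse (f x) * inverse (f x))) \<in> flat_algebra"
    using f' inverse.hyps by (intro flat_algebra.mult flat_algebra.const flat_algebra.inverse)
  ultimately show ?case
    by (intro bexI[of _ "\<lambda>x. (- 1) * f' x * (inverse (f x) * inverse (f x))"]) auto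
qed

lemma flat_algebra_smooth_on:
  assumes "f \<in> flat_algebra"
  shows "smooth_on_real A (\<lambda>x. complex_of_real (f x))"
proof -
  have "\<exists>D. \<forall>n. (D n \<in> flat_algebra \<and> (n = 0 \<longrightarrow> D n = f))
      \<and> (\<forall>x. (D n has_real_derivative D (Suc n) x) (at x))"
  proof (rule dependent_nat_choice)
    show "\<exists>g. g \<in> flat_algebra \<and> (0 = (0::nat) \<longrightarrow> g = f)"
      using assms by blast
    show "\<exists>h. (h \<in> flat_algebra \<and> (Suc n = 0 \<longrightarrow> h = f)) \<and> (\<forall>x. (g has_real_derivative h x) (at x))"
      if "g \<in> flat_algebra \<and> (n = 0 \<longrightarrow> g = f)" for g n
      using flat_algebra_has_derivative that by blast
  qed
  then obtain D where D: "\<And>n. (D n \<in> flat_algebra \<and> (n = 0 \<longrightarrow> D n = f))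
      \<and> (\<forall>x. (D n has_real_derivative D (Suc n) x) (at x))"
    by blast
  show ?thesis
    unfolding smooth_on_real_def
  proof (intro exI[of _ "\<lambda>n x. complex_of_real (D n x)"] conjI ballI allI)
    show "complex_of_real (D 0 x) = complex_of_real (f x)" for x
      using D[of 0] by simp
    show "((\<lambda>x. complex_of_real (D n x)) has_vector_derivative complex_of_real (D (Suc n) x)) (at x)"
      for n x
      using D[of n] by (intro has_vector_derivative_of_real) blast
  qed
qed

lemma flat_algebra_continuous_on:
  assumes "f \<in> flat_algebra"
  shows "continuous_on S f"
proof -
  obtain f' where "\<forall>x. (f has_real_derivative f' x) (at x)"
    using flat_algebra_has_derivative[OF assms] by blast
  then show ?thesis
    by (intro continuous_at_imp_continuous_on) (auto intro: DERIV_isCont)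
qed

lemma flat_algebra_lipschitz_on:
  assumes "f \<in> flat_algebra"
  obtains L where "L-lipschitz_on {a..b} f"
proof -
  obtain f' where f': "f' \<in> flat_algebra" "\<And>x. (f has_real_derivative f' x) (at x)"
    using flat_algebra_has_derivative[OF assms] by blast
  have "bounded (f' ` {a..b})"
    by (intro compact_imp_bounded compact_continuous_image flat_algebra_continuous_on f'(1) compact_Icc)
  then obtain B where B: "B > 0" "\<And>x. x \<in> {a..b} \<Longrightarrow> norm (f' x) \<le> B"
    unfolding bounded_pos by auto
  have "norm (f x - f y) \<le> B * norm (x - y)" if "x \<in> {a..b}" "y \<in> {a..b}" for x y
  proof (rule field_differentiable_bound[of "{a..b}" f f'])
    show "(f has_field_derivative f' z) (at z within {a..b})" for z
      using f'(2) by (rule has_field_derivative_at_within)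
  qed (use B that in auto)
  then show ?thesis
    using B by (intro that lipschitz_onI) (auto simp: dist_norm)
qed

definition smooth_step :: "real \<Rightarrow> real" where
  "smooth_step x = flat_deriv 0 (x - 1/2) / (flat_deriv 0 (x - 1/2) + flat_deriv 0 (3/2 - x))"

lemma smooth_step_denominator_pos: "0 < flat_deriv 0 (x - 1/2) + flat_deriv 0 (3/2 - x)"
  by (cases "x > 1/2") (auto simp: flat_deriv_0 add_pos_nonneg add_nonneg_pos)

lemma smooth_step_in_flat_algebra: "smooth_step \<in> flat_algebra"
proof -
  have "(\<lambda>x. flat_deriv 0 (x - 1/2)) = (\<lambda>x. flat_deriv 0 (- 1/2 + 1 * x))"
    by (simp add: algebra_simps)
  then have left: "(\<lambda>x. flat_deriv 0 (x - 1/2)) \<in> flat_algebra"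
    using flat_algebra.flat by metis
  have "(\<lambda>x. flat_deriv 0 (3/2 - x)) = (\<lambda>x. flat_deriv 0 (3/2 + (- 1) * x))"
    by simp
  then have right: "(\<lambda>x. flat_deriv 0 (3/2 - x)) \<in> flat_algebra"
    using flat_algebra.flat by metis
  have "\<forall>x. flat_deriv 0 (x - 1/2) + flat_deriv 0 (3/2 - x) \<noteq> 0"
    using smooth_step_denominator_pos less_irrefl by metis
  then have "(\<lambda>x. flat_deriv 0 (x - 1/2) * inverse (flat_deriv 0 (x - 1/2) + flat_deriv 0 (3/2 - x)))
          \<in> flat_algebra"
    by (intro flat_algebra.mult flat_algebra.inverse flat_algebra.add left right)
  then show ?thesis
    unfolding smooth_step_def[abs_def] divide_inverse .
qed

lemma smooth_step_eq_0: "x \<le> 1/2 \<Longrightarrow> smooth_step x = 0"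
  by (simp add: smooth_step_def flat_deriv_0)

lemma smooth_step_eq_1: "3/2 \<le> x \<Longrightarrow> smooth_step x = 1"
  by (simp add: smooth_step_def flat_deriv_0)

lemma smooth_step_pos: "1/2 < x \<Longrightarrow> 0 < smooth_step x"
  using smooth_step_denominator_pos[of x] by (simp add: smooth_step_def flat_deriv_0)

lemma smooth_step_bounds: "0 \<le> smooth_step x \<and> smooth_step x \<le> 1"
proof -
  have "0 \<le> flat_deriv 0 y" for y
    by (simp add: flat_deriv_0)
  then show ?thesis
    using smooth_step_denominator_pos[of x] by (simp add: smooth_step_def divide_le_eq_1)
qed

section \<open>Bernstein averages of a step function\<close>

lemma sum_Bernstein_shifted_square:
  fixes q t :: real
  assumes "N \<ge> 1"
  shows "(\<Sum>k\<le>N. Bernstein N k q * (2*q - 2*t - 2*real k*(1-t)/real N)^2)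
       = 4*t^2*(1-q)^2 + 4*(1-t)^2*q*(1-q)/real N"
proof -
  define A where "A = 2*q - 2*t"
  define B where "B = - 2*(1-t)/real N"
  have sq: "(2*q - 2*t - 2*real k*(1-t)/real N)^2
      = A^2 + (2*A*B + B^2) * real k + B^2 * (real k * (real k - 1))" for k
    unfolding A_def B_def power2_eq_square by (simp add: divide_inverse algebra_simps)
  have "(\<Sum>k\<le>N. Bernstein N k q * (2*q - 2*t - 2*real k*(1-t)/real N)^2)
      = (\<Sum>k\<le>N. A^2 * Bernstein N k q + (2*A*B + B^2) * (real k * Bernstein N k q)
          + B^2 * (real k * (real k - 1) * Bernstein N k q))"
    by (rule sum.cong[OF refl]) (simp only: sq, simp add: algebra_simps)
  also have "\<dots> = A^2 * (\<Sum>k\<le>N. Bernstein N k q) + (2*A*B + B^2) * (\<Sum>k\<le>N. real k * Bernstein N k q)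
        + B^2 * (\<Sum>k\<le>N. real k * (real k - 1) * Bernstein N k q)"
    by (simp only: sum.distrib sum_distrib_left)
  also have "\<dots> = A^2 + (2*A*B + B^2) * (real N * q) + B^2 * (real N * (real N - 1) * q^2)"
    by simp
  also have "\<dots> = 4*t^2*(1-q)^2 + 4*(1-t)^2*q*(1-q)/real N"
    using assms by (simp add: A_def B_def field_simps power2_eq_square)
  finally show ?thesis .
qed

lemma sum_Bernstein_shifted_square_le:
  fixes q t :: real
  assumes "N \<ge> 1" "0 \<le> q" "q \<le> 1" "0 \<le> t" "t \<le> 1"
  shows "(\<Sum>k\<le>N. Bernstein N k q * (2*q - 2*t - 2*real k*(1-t)/real N)^2)
       \<le> (1/sqrt (real N) + 2*t)^2"
proof -
  have "4*t^2*(1-q)^2 \<le> 4*t^2"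
    using assms by (simp add: power_le_one mult_left_le)
  moreover have "4*(1-t)^2*q*(1-q)/real N \<le> 1/real N"
  proof -
    have "(1-t)^2 * (q*(1-q)) \<le> 1 * (1/4)"
    proof (rule mult_mono)
      show "(1-t)^2 \<le> 1" using assms by (intro power_le_one) auto
      have "0 \<le> (q - 1/2)^2" by simp
      then show "q*(1-q) \<le> 1/4" by (simp add: power2_eq_square algebra_simps)
    qed (use assms in auto)
    then show ?thesis
      using assms by (intro divide_right_mono) (auto simp: algebra_simps)
  qed
  moreover have "4*t^2 + 1/real N \<le> (1/sqrt (real N) + 2*t)^2"
    using assms by (simp add: power2_sum power_divide)
  ultimately show ?thesis
    using sum_Bernstein_shifted_square[OF assms(1), of q t] by linarith
qed

lemma h_eps_bounds:
  assumes "N \<ge> 1" "k \<le> N" "0 \<le> e N" "e N \<le> 1"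
  shows "-1 \<le> h_eps e N k" "h_eps e N k \<le> 1 - 2 * real k / real N" "h_eps e N k \<le> 1"
    "1 - 2 * real k / real N - 2 * e N \<le> h_eps e N k"
proof -
  have N: "real N > 0" using assms by simp
  have "0 \<le> e N * (real N - real k)" "e N * (real N - real k) \<le> real N - real k"
    using assms by (simp_all add: mult_left_le_one_le)
  moreover have "e N * (real N - real k) \<le> e N * real N"
    using assms by (simp add: mult_left_mono)
  ultimately show "-1 \<le> h_eps e N k" "h_eps e N k \<le> 1 - 2 * real k / real N" "h_eps e N k \<le> 1"
    "1 - 2 * real k / real N - 2 * e N \<le> h_eps e N k"
    using N by (simp_all add: h_eps_def field_simps)
qed

lemma Bernstein_average_Lipschitz_estimate:
  fixes f :: "real \<Rightarrow> real"
  assumes lip: "L-lipschitz_on S f" and N: "N \<ge> 1" and q: "0 \<le> q" "q \<le> 1"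
    and e: "0 \<le> e N" "e N \<le> 1"
    and T: "a' + 1 - 2*q \<in> S" and nodes: "\<And>k. k \<le> N \<Longrightarrow> a' + h_eps e N k \<in> S"
  shows "\<bar>(\<Sum>k\<le>N. Bernstein N k q * f (a' + h_eps e N k)) - f (a' + 1 - 2*q)\<bar>
          \<le> L * (1/sqrt (real N) + 2 * e N)"
proof -
  define x where "x k = a' + h_eps e N k" for k
  define T where "T = a' + 1 - 2*q"
  define s where "s = 1/sqrt (real N) + 2 * e N"
  have s: "s > 0" using N e by (simp add: s_def add_pos_nonneg)
  have L: "L \<ge> 0" using lip by (rule lipschitz_on_nonneg)
  have B: "0 \<le> Bernstein N k q" for k using q by (rule Bernstein_nonneg)
  have dev: "x k - T = 2*q - 2*e N - 2*real k*(1 - e N)/real N" for k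
    using N by (simp add: x_def T_def h_eps_def field_simps)
  \<comment> \<open>AM-GM reduces the first absolute moment of the nodes to the second one.\<close>
  have am_gm: "\<bar>y\<bar> \<le> (s^2 + y^2) / (2 * s)" for y
  proof -
    have "0 \<le> (\<bar>y\<bar> - s)^2" by simp
    then show ?thesis using s by (simp add: field_simps power2_eq_square)
  qed
  have "(\<Sum>k\<le>N. Bernstein N k q * f (x k)) - f T = (\<Sum>k\<le>N. Bernstein N k q * (f (x k) - f T))"
    by (simp add: right_diff_distrib sum_subtractf flip: sum_distrib_right)
  then have "\<bar>(\<Sum>k\<le>N. Bernstein N k q * f (x k)) - f T\<bar>
      \<le> (\<Sum>k\<le>N. \<bar>Bernstein N k q * (f (x k) - f T)\<bar>)"
    by (simp add: sum_abs)
  also have "\<dots> \<le> (\<Sum>k\<le>N. Bernstein N k q * (L * ((s^2 + (x k - T)^2) / (2 * s))))"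
  proof (rule sum_mono)
    fix k assume "k \<in> {..N}"
    then have "\<bar>f (x k) - f T\<bar> \<le> L * \<bar>x k - T\<bar>"
      using lipschitz_onD[OF lip, of "x k" T] nodes T by (simp add: x_def T_def dist_real_def)
    also have "\<dots> \<le> L * ((s^2 + (x k - T)^2) / (2 * s))"
      by (rule mult_left_mono[OF am_gm L])
    finally have "Bernstein N k q * \<bar>f (x k) - f T\<bar>
        \<le> Bernstein N k q * (L * ((s^2 + (x k - T)^2) / (2 * s)))"
      by (rule mult_left_mono[OF _ B])
    then show "\<bar>Bernstein N k q * (f (x k) - f T)\<bar>
        \<le> Bernstein N k q * (L * ((s^2 + (x k - T)^2) / (2 * s)))"
      using B[of k] by (simp add: abs_mult)
  qed
  also have "\<dots> = (\<Sum>k\<le>N. L / (2 * s) * (s^2 * Bernstein N k q + Bernstein N k q * (x k - T)^2))"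
    by (rule sum.cong[OF refl]) (simp add: algebra_simps add_divide_distrib)
  also have "\<dots> = L / (2 * s) * (s^2 + (\<Sum>k\<le>N. Bernstein N k q * (x k - T)^2))"
    by (simp only: sum.distrib flip: sum_distrib_left) (simp flip: sum_distrib_left)
  also have "\<dots> \<le> L / (2 * s) * (s^2 + s^2)"
    using sum_Bernstein_shifted_square_le[OF N q e] L s
    by (intro mult_left_mono add_left_mono) (simp_all add: dev s_def)
  also have "\<dots> = L * s"
    using s by (simp add: field_simps power2_eq_square)
  finally show ?thesis
    by (simp add: x_def T_def s_def)
qed

lemma Bernstein_sum_bound_high:
  fixes g :: "nat \<Rightarrow> real"
  assumes g: "\<And>k. k \<le> N \<Longrightarrow> \<bar>g k\<bar> \<le> 1"
    and supp: "\<And>k. k \<le> N \<Longrightarrow> g k \<noteq> 0 \<Longrightarrow> N \<le> 5 * k"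
  shows "\<bar>\<Sum>k\<le>N. Bernstein N k x * g k\<bar> \<le> ((32 * \<bar>x\<bar> + \<bar>1 - x\<bar>) / 2) ^ N"
proof -
  have "\<bar>\<Sum>k\<le>N. Bernstein N k x * g k\<bar> \<le> (\<Sum>k\<le>N. \<bar>Bernstein N k x * g k\<bar>)"
    by (rule sum_abs)
  also have "\<dots> \<le> (\<Sum>k\<le>N. real (N choose k) * (32 * \<bar>x\<bar>)^k * \<bar>1 - x\<bar>^(N-k) / 2^N)"
  proof (rule sum_mono)
    fix k assume k: "k \<in> {..N}"
    show "\<bar>Bernstein N k x * g k\<bar> \<le> real (N choose k) * (32 * \<bar>x\<bar>)^k * \<bar>1 - x\<bar>^(N-k) / 2^N"
    proof (cases "g k = 0")
      case False
      have "(2::real)^N \<le> 2^(5*k)"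
        using supp k False by (intro power_increasing) auto
      then have "1 \<le> (32::real)^k / 2^N"
        by (simp add: power_mult)
      have "\<bar>Bernstein N k x * g k\<bar> \<le> real (N choose k) * \<bar>x\<bar>^k * \<bar>1 - x\<bar>^(N-k) * 1"
        using g[of k] k by (simp add: Bernstein_def abs_mult power_abs mult_left_le)
      also have "\<dots> \<le> real (N choose k) * \<bar>x\<bar>^k * \<bar>1 - x\<bar>^(N-k) * (32^k / 2^N)"
        using \<open>1 \<le> 32^k / 2^N\<close> by (intro mult_left_mono) auto
      also have "\<dots> = real (N choose k) * (32 * \<bar>x\<bar>)^k * \<bar>1 - x\<bar>^(N-k) / 2^N"
        by (simp add: power_mult_distrib)
      finally show ?thesis .
    qed simp
  qed
  also have "\<dots> = ((32 * \<bar>x\<bar> + \<bar>1 - x\<bar>) / 2) ^ N"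
    by (simp add: binomial_ring sum_divide_distrib power_divide)
  finally show ?thesis .
qed

lemma Bernstein_sum_bound_low:
  fixes g :: "nat \<Rightarrow> real"
  assumes g: "\<And>k. k \<le> N \<Longrightarrow> \<bar>g k\<bar> \<le> 1"
    and supp: "\<And>k. k \<le> N \<Longrightarrow> g k \<noteq> 0 \<Longrightarrow> N \<le> 5 * (N - k)"
  shows "\<bar>\<Sum>k\<le>N. Bernstein N k x * g k\<bar> \<le> ((\<bar>x\<bar> + 32 * \<bar>1 - x\<bar>) / 2) ^ N"
proof -
  have "(\<Sum>k\<le>N. Bernstein N k x * g k) = (\<Sum>k\<le>N. Bernstein N (N - k) x * g (N - k))"
    using sum.atLeastAtMost_rev[of "\<lambda>k. Bernstein N k x * g k" 0 N] by (simp add: atLeast0AtMost)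
  also have "\<dots> = (\<Sum>k\<le>N. Bernstein N k (1 - x) * g (N - k))"
    by (intro sum.cong refl) (simp add: Bernstein_def binomial_symmetric[symmetric])
  also have "\<bar>\<dots>\<bar> \<le> ((32 * \<bar>1 - x\<bar> + \<bar>1 - (1 - x)\<bar>) / 2) ^ N"
  proof (rule Bernstein_sum_bound_high)
    show "\<bar>g (N - k)\<bar> \<le> 1" for k
      by (simp add: g)
    show "N \<le> 5 * k" if "k \<le> N" "g (N - k) \<noteq> 0" for k
      using supp[of "N - k"] that by simp
  qed
  finally show ?thesis
    by (simp add: add.commute)
qed

lemma Bernstein_average_step_right:
  fixes f :: "real \<Rightarrow> real"
  assumes f1: "\<And>x. 3/2 \<le> x \<Longrightarrow> f x = 1" and fb: "\<And>x. 0 \<le> f x \<and> f x \<le> 1"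
    and N: "N \<ge> 1" and e: "0 \<le> e N" "e N \<le> 1/20"
    and a': "1 < a'" and a: "1 < a" "a < 101/100"
  shows "\<bar>(\<Sum>k\<le>N. Bernstein N k ((1-a)/2) * f (a' + h_eps e N k)) - 1\<bar> \<le> (3/5)^N"
proof -
  define q where "q = (1-a)/2"
  have "(\<Sum>k\<le>N. Bernstein N k q * f (a' + h_eps e N k)) - 1
      = (\<Sum>k\<le>N. Bernstein N k q * (f (a' + h_eps e N k) - 1))"
    by (simp add: right_diff_distrib sum_subtractf)
  also have "\<bar>\<dots>\<bar> \<le> ((32 * \<bar>q\<bar> + \<bar>1 - q\<bar>) / 2) ^ N"
  proof (rule Bernstein_sum_bound_high)
    show "\<bar>f (a' + h_eps e N k) - 1\<bar> \<le> 1" for k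
      using fb[of "a' + h_eps e N k"] by auto
    show "N \<le> 5 * k" if "k \<le> N" "f (a' + h_eps e N k) - 1 \<noteq> 0" for k
    proof (rule ccontr)
      assume "\<not> N \<le> 5 * k"
      then have "2 * real k / real N \<le> 2/5"
        using N by (simp add: field_simps)
      then have "3/2 \<le> a' + h_eps e N k"
        using h_eps_bounds(4)[where e=e, OF N \<open>k \<le> N\<close>] e a' by linarith
      then show False
        using f1 that(2) by simp
    qed
  qed
  also have "\<dots> \<le> (3/5)^N"
  proof (rule power_mono)
    have "\<bar>q\<bar> = (a - 1) / 2" "\<bar>1 - q\<bar> = (1 + a) / 2"
      using a by (simp_all add: q_def field_simps)
    then show "(32 * \<bar>q\<bar> + \<bar>1 - q\<bar>) / 2 \<le> 3/5"
      using a by simp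
  qed simp
  finally show ?thesis
    by (simp add: q_def)
qed

lemma Bernstein_average_step_left:
  fixes f :: "real \<Rightarrow> real"
  assumes f0: "\<And>x. x \<le> 1/2 \<Longrightarrow> f x = 0" and fb: "\<And>x. 0 \<le> f x \<and> f x \<le> 1"
    and N: "N \<ge> 1" and e: "0 \<le> e N" "e N \<le> 1"
    and a': "a' < 101/100" and a: "-101/100 < a" "a < -1"
  shows "\<bar>\<Sum>k\<le>N. Bernstein N k ((1-a)/2) * f (a' + h_eps e N k)\<bar> \<le> (3/5)^N"
proof -
  define q where "q = (1-a)/2"
  have "\<bar>\<Sum>k\<le>N. Bernstein N k q * f (a' + h_eps e N k)\<bar> \<le> ((\<bar>q\<bar> + 32 * \<bar>1 - q\<bar>) / 2) ^ N"
  proof (rule Bernstein_sum_bound_low)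
    show "\<bar>f (a' + h_eps e N k)\<bar> \<le> 1" for k
      using fb[of "a' + h_eps e N k"] by auto
    show "N \<le> 5 * (N - k)" if "k \<le> N" "f (a' + h_eps e N k) \<noteq> 0" for k
    proof (rule ccontr)
      assume "\<not> N \<le> 5 * (N - k)"
      then have "8/5 \<le> 2 * real k / real N"
        using N \<open>k \<le> N\<close> by (simp add: field_simps)
      then have "a' + h_eps e N k \<le> 1/2"
        using h_eps_bounds(2)[where e=e, OF N \<open>k \<le> N\<close> e] a' by linarith
      then show False
        using f0 that(2) by simp
    qed
  qed
  also have "\<dots> \<le> (3/5)^N"
  proof (rule power_mono)
    have "\<bar>q\<bar> = (1 - a) / 2" "\<bar>1 - q\<bar> = - (1 + a) / 2"
      using a by (simp_all add: q_def)
    then show "(\<bar>q\<bar> + 32 * \<bar>1 - q\<bar>) / 2 \<le> 3/5"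
      using a by simp
  qed simp
  finally show ?thesis
    by (simp add: q_def)
qed

lemma Bernstein_average_step_estimate:
  fixes f :: "real \<Rightarrow> real"
  assumes lip: "L-lipschitz_on {0..3} f"
    and f0: "\<And>x. x \<le> 1/2 \<Longrightarrow> f x = 0" and f1: "\<And>x. 3/2 \<le> x \<Longrightarrow> f x = 1"
    and fb: "\<And>x. 0 \<le> f x \<and> f x \<le> 1"
    and N: "N \<ge> 1" and e: "0 \<le> e N" "e N \<le> 1/20"
    and a': "1 < a'" "a' < 101/100" and aa': "0 < a + a'" "a + a' < 201/100"
  shows "\<bar>(\<Sum>k\<le>N. Bernstein N k ((1-a)/2) * f (a' + h_eps e N k)) - f (a + a')\<bar>
          \<le> L * (1/sqrt (real N) + 2 * e N) + (3/5)^N"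
proof -
  have L: "0 \<le> L * (1/sqrt (real N) + 2 * e N)"
    using lipschitz_on_nonneg[OF lip] e by simp
  consider "\<bar>a\<bar> \<le> 1" | "1 < a" | "a < -1"
    by linarith
  then show ?thesis
  proof cases
    case 1
    have T: "a' + 1 - 2 * ((1 - a) / 2) = a + a'"
      by (simp add: field_simps)
    have "\<bar>(\<Sum>k\<le>N. Bernstein N k ((1-a)/2) * f (a' + h_eps e N k)) - f (a' + 1 - 2 * ((1-a)/2))\<bar>
        \<le> L * (1/sqrt (real N) + 2 * e N)"
    proof (rule Bernstein_average_Lipschitz_estimate[OF lip N])
      show "a' + h_eps e N k \<in> {0..3}" if "k \<le> N" for k
        using h_eps_bounds(1,3)[where e=e, OF N that] e a' by simp
      show "a' + 1 - 2 * ((1 - a) / 2) \<in> {0..3}"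
        using aa' T by simp
    qed (use 1 e in auto)
    moreover have "0 \<le> (3/5::real)^N"
      by simp
    ultimately show ?thesis
      unfolding T by linarith
  next
    case 2
    have "a < 101/100"
      using a' aa' by linarith
    with 2 have "\<bar>(\<Sum>k\<le>N. Bernstein N k ((1-a)/2) * f (a' + h_eps e N k)) - 1\<bar> \<le> (3/5)^N"
      by (intro Bernstein_average_step_right[where f=f and e=e, OF f1 fb N e a'(1)])
    moreover have "f (a + a') = 1"
      using 2 a' by (intro f1) simp
    ultimately show ?thesis
      using L by simp
  next
    case 3
    have "-101/100 < a"
      using a' aa' by linarith
    with 3 have "\<bar>\<Sum>k\<le>N. Bernstein N k ((1-a)/2) * f (a' + h_eps e N k)\<bar> \<le> (3/5)^N"
      using e by (intro Bernstein_average_step_left[where f=f and e=e, OF f0 fb N _ _ a'(2)]) auto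
    moreover have "f (a + a') = 0"
      using 3 a' by (intro f0) simp
    ultimately show ?thesis
      using L by simp
  qed
qed

section \<open>The supershift property\<close>

lemma S_eps_of_real:
  "S_eps e (\<lambda>x. complex_of_real (f x)) N a a' =
     complex_of_real (\<Sum>k\<le>N. Bernstein N k ((1-a)/2) * f (a' + h_eps e N k))"
proof -
  have h: "1 - (1 - a) / 2 = (1 + a) / (2::real)"
    by (simp add: field_simps)
  show ?thesis
    unfolding S_eps_def of_real_sum atLeast0AtMost Bernstein_def h
    by (intro sum.cong refl) (simp add: mult_ac)
qed

lemma adm_pairs_bounds:
  assumes "(a, a') \<in> adm_pairs {0<..<201/100}"
  shows "1 < a'" "a' < 101/100" "0 < a + a'" "a + a' < 201/100"
proof -
  have "{a' - 1..a' + 1} \<subseteq> {0<..<201/100}" "a + a' \<in> {0<..<201/100}"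
    using assms unfolding adm_pairs_def by auto
  moreover have "a' - 1 \<in> {a' - 1..a' + 1}" "a' + 1 \<in> {a' - 1..a' + 1}"
    by auto
  ultimately have "a' - 1 \<in> {0<..<201/100}" "a' + 1 \<in> {0<..<201/100}" "a + a' \<in> {0<..<201/100}"
    by blast+
  then show "1 < a'" "a' < 101/100" "0 < a + a'" "a + a' < 201/100"
    by auto
qed

lemma regular_supershiftI:
  assumes cont: "continuous_on A \<psi>"
    and uniform: "\<And>d. d > 0 \<Longrightarrow> \<exists>\<eta>>0. \<forall>\<^sub>F N in sequentially. \<forall>e a a'.
        adm_eps e \<longrightarrow> e N \<le> \<eta> \<longrightarrow> (a, a') \<in> adm_pairs A \<longrightarrow> norm (S_eps e \<psi> N a a' - \<psi> (a + a')) < d"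
  shows "regular_supershift A \<psi>"
  unfolding regular_supershift_def
proof (intro conjI cont allI impI)
  fix e :: "nat \<Rightarrow> real" and K :: "(real \<times> real) set"
  assume e: "adm_eps e" and K: "compact K \<and> K \<subseteq> adm_pairs A"
  show "uniform_limit K (\<lambda>N (a, a'). S_eps e \<psi> N a a') (\<lambda>(a, a'). \<psi> (a + a')) sequentially"
    unfolding uniform_limit_iff
  proof (intro allI impI)
    fix d :: real assume "d > 0"
    then obtain \<eta> where "\<eta> > 0" and ev: "\<forall>\<^sub>F N in sequentially. \<forall>e a a'.
        adm_eps e \<longrightarrow> e N \<le> \<eta> \<longrightarrow> (a, a') \<in> adm_pairs A \<longrightarrow> norm (S_eps e \<psi> N a a' - \<psi> (a + a')) < d"
      using uniform by blast
    have "\<forall>\<^sub>F N in sequentially. e N < \<eta>"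
      using e \<open>\<eta> > 0\<close> unfolding adm_eps_def by (intro order_tendstoD(2)) auto
    with ev show "\<forall>\<^sub>F N in sequentially. \<forall>x\<in>K.
        dist ((\<lambda>N (a, a'). S_eps e \<psi> N a a') N x) ((\<lambda>(a, a'). \<psi> (a + a')) x) < d"
    proof eventually_elim
      case (elim N)
      show ?case
      proof
        fix x assume "x \<in> K"
        then obtain a a' where x: "x = (a, a')" "(a, a') \<in> adm_pairs A"
          using K by (cases x) auto
        have "norm (S_eps e \<psi> N a a' - \<psi> (a + a')) < d"
          using elim(1) e x(2) elim(2) by auto
        then show "dist ((\<lambda>N (a, a'). S_eps e \<psi> N a a') N x) ((\<lambda>(a, a'). \<psi> (a + a')) x) < d"
          by (simp add: x(1) dist_norm)
      qed
    qed
  qed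
next
  fix F :: "(nat \<Rightarrow> real) set" and K :: "(real \<times> real) set" and d :: real
  assume F: "(\<forall>e\<in>F. adm_eps e) \<and> (\<forall>\<delta>>0. \<forall>\<^sub>F N in sequentially. \<forall>e\<in>F. e N \<le> \<delta>)"
    and K: "compact K \<and> K \<subseteq> adm_pairs A" and "d > 0"
  then obtain \<eta> where "\<eta> > 0" and ev: "\<forall>\<^sub>F N in sequentially. \<forall>e a a'.
      adm_eps e \<longrightarrow> e N \<le> \<eta> \<longrightarrow> (a, a') \<in> adm_pairs A \<longrightarrow> norm (S_eps e \<psi> N a a' - \<psi> (a + a')) < d"
    using uniform by blast
  have "\<forall>\<^sub>F N in sequentially. \<forall>e\<in>F. e N \<le> \<eta>"
    using F \<open>\<eta> > 0\<close> by blast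
  with ev show "\<forall>\<^sub>F N in sequentially. \<forall>e\<in>F. \<forall>(a, a')\<in>K. norm (S_eps e \<psi> N a a' - \<psi> (a + a')) < d"
  proof eventually_elim
    case (elim N)
    show ?case
    proof (intro ballI)
      fix e x assume "e \<in> F" "x \<in> K"
      then obtain a a' where x: "x = (a, a')" "(a, a') \<in> adm_pairs A"
        using K by (cases x) auto
      have "adm_eps e" "e N \<le> \<eta>"
        using F elim(2) \<open>e \<in> F\<close> by blast+
      then have "norm (S_eps e \<psi> N a a' - \<psi> (a + a')) < d"
        using elim(1) x(2) by blast
      then show "case x of (a, a') \<Rightarrow> norm (S_eps e \<psi> N a a' - \<psi> (a + a')) < d"
        by (simp add: x(1))
    qed
  qed
qed

lemma error_bound_eventually_less:
  fixes L d :: real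
  assumes L: "0 \<le> L" and d: "0 < d"
  obtains \<eta> where "0 < \<eta>" "\<eta> \<le> 1/20"
    "\<forall>\<^sub>F N in sequentially. 1 \<le> N \<and>
       (\<forall>t. 0 \<le> t \<longrightarrow> t \<le> \<eta> \<longrightarrow> L * (1/sqrt (real N) + 2 * t) + (3/5)^N < d)"
proof
  define \<eta> where "\<eta> = min (1/20) (d / (4 * (L + 1)))"
  show "0 < \<eta>"
    using assms by (simp add: \<eta>_def)
  show "\<eta> \<le> 1/20"
    unfolding \<eta>_def by (rule min.cobounded1)
  have "2 * L * \<eta> \<le> 2 * L * (d / (4 * (L + 1)))"
    using L by (intro mult_left_mono) (auto simp: \<eta>_def)
  also have "\<dots> \<le> d/2"
    using assms by (simp add: field_simps)
  finally have L\<eta>: "2 * L * \<eta> \<le> d/2" .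
  have "(\<lambda>N. L * sqrt (inverse (real N)) + (3/5::real)^N) \<longlonglongrightarrow> L * sqrt 0 + 0"
    by (intro tendsto_intros lim_inverse_n) auto
  then have "\<forall>\<^sub>F N in sequentially. L * sqrt (inverse (real N)) + (3/5::real)^N < d/2"
    using d by (intro order_tendstoD(2)) auto
  with eventually_ge_at_top[of 1]
  show "\<forall>\<^sub>F N in sequentially. 1 \<le> N \<and>
      (\<forall>t. 0 \<le> t \<longrightarrow> t \<le> \<eta> \<longrightarrow> L * (1/sqrt (real N) + 2 * t) + (3/5)^N < d)"
  proof eventually_elim
    case (elim N)
    have "L * (1/sqrt (real N) + 2 * t) + (3/5)^N < d" if "0 \<le> t" "t \<le> \<eta>" for t
    proof -
      have "L * (2 * t) \<le> L * (2 * \<eta>)"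
        using L that by (intro mult_left_mono) auto
      moreover have "1 / sqrt (real N) = sqrt (inverse (real N))"
        by (simp add: real_sqrt_inverse divide_inverse)
      ultimately show ?thesis
        using elim(2) L\<eta> by (simp add: distrib_left)
    qed
    with elim(1) show ?case
      by simp
  qed
qed

lemma smooth_step_S_eps_uniform:
  assumes "d > 0"
  shows "\<exists>\<eta>>0. \<forall>\<^sub>F N in sequentially. \<forall>e a a'. adm_eps e \<longrightarrow> e N \<le> \<eta> \<longrightarrow>
    (a, a') \<in> adm_pairs {0<..<201/100} \<longrightarrow>
    norm (S_eps e (\<lambda>x. complex_of_real (smooth_step x)) N a a' - complex_of_real (smooth_step (a + a'))) < d"
proof -
  obtain L where lip: "L-lipschitz_on {0..3} smooth_step"
    using flat_algebra_lipschitz_on[OF smooth_step_in_flat_algebra] .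
  obtain \<eta> where \<eta>: "0 < \<eta>" "\<eta> \<le> 1/20" and ev: "\<forall>\<^sub>F N in sequentially. 1 \<le> N \<and>
      (\<forall>t. 0 \<le> t \<longrightarrow> t \<le> \<eta> \<longrightarrow> L * (1/sqrt (real N) + 2 * t) + (3/5)^N < d)"
    using error_bound_eventually_less[OF lipschitz_on_nonneg[OF lip] assms] by blast
  have "\<forall>\<^sub>F N in sequentially. \<forall>e a a'. adm_eps e \<longrightarrow> e N \<le> \<eta> \<longrightarrow>
    (a, a') \<in> adm_pairs {0<..<201/100} \<longrightarrow>
    norm (S_eps e (\<lambda>x. complex_of_real (smooth_step x)) N a a' - complex_of_real (smooth_step (a + a'))) < d"
    using ev
  proof eventually_elim
    case (elim N)
    show ?case
    proof (intro allI impI)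
      fix e a a' assume e: "adm_eps e" "e N \<le> \<eta>" and p: "(a, a') \<in> adm_pairs {0<..<201/100}"
      have "0 \<le> e N" "e N \<le> 1/20"
        using e \<eta> by (auto simp: adm_eps_def)
      have "\<bar>(\<Sum>k\<le>N. Bernstein N k ((1-a)/2) * smooth_step (a' + h_eps e N k)) - smooth_step (a + a')\<bar>
          \<le> L * (1/sqrt (real N) + 2 * e N) + (3/5)^N"
        using elim Bernstein_average_step_estimate[where e=e, OF lip smooth_step_eq_0 smooth_step_eq_1
            smooth_step_bounds _ \<open>0 \<le> e N\<close> \<open>e N \<le> 1/20\<close> adm_pairs_bounds[OF p]] by blast
      also have "\<dots> < d"
        using elim \<open>0 \<le> e N\<close> e by blast
      finally show "norm (S_eps e (\<lambda>x. complex_of_real (smooth_step x)) N a a'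
          - complex_of_real (smooth_step (a + a'))) < d"
        unfolding S_eps_of_real of_real_diff[symmetric] norm_of_real .
    qed
  qed
  with \<eta> show ?thesis
    by blast
qed

section \<open>Failure of analyticity\<close>

lemma real_analytic_on_vanishing_left:
  assumes "real_analytic_on A \<psi>" "x0 \<in> A" "\<delta> > 0"
    and left: "\<And>x. x0 - \<delta> < x \<Longrightarrow> x < x0 \<Longrightarrow> \<psi> x = 0"
  obtains r where "r > 0" "\<And>x. \<bar>x - x0\<bar> < r \<Longrightarrow> \<psi> x = 0"
proof -
  obtain r c where "r > 0" and ser: "\<And>x. \<bar>x - x0\<bar> < r \<Longrightarrow>
      (\<lambda>n. c n * complex_of_real ((x - x0) ^ n)) sums \<psi> x"
    using assms(1,2) unfolding real_analytic_on_def by blast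
  have ser': "(\<lambda>n. c n * complex_of_real t ^ n) sums \<psi> (x0 + t)" if "\<bar>t\<bar> < r" for t
    using ser[of "x0 + t"] that by (simp add: of_real_power)
  define R where "R = r/2"
  have R: "0 < R" "R < r"
    using \<open>r > 0\<close> by (auto simp: R_def)
  \<comment> \<open>\<open>g\<close> extends the power series holomorphically to a complex disc.\<close>
  define g where "g z = (\<Sum>n. c n * z ^ n)" for z
  have "summable (\<lambda>n. c n * complex_of_real R ^ n)"
    using ser'[of R] R by (auto simp: sums_iff)
  then have "(\<lambda>n. c n * (z - 0) ^ n) sums g z" if "z \<in> ball 0 R" for z
    using powser_inside[of c "complex_of_real R" z] that R by (simp add: g_def summable_sums)
  then have hol: "g holomorphic_on ball 0 R"
    by (rule power_series_holomorphic)
  have g_real: "g (complex_of_real t) = \<psi> (x0 + t)" if "\<bar>t\<bar> < r" for t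
    using sums_unique[OF ser'[OF that]] by (simp add: g_def)
  define U where "U = complex_of_real ` {- min \<delta> R<..<0}"
  have g0: "g z = 0" if "z \<in> ball 0 R" for z
  proof (rule analytic_continuation[OF hol open_ball connected_ball])
    show "U \<subseteq> ball 0 R" "0 \<in> ball 0 R"
      using R by (auto simp: U_def)
    show "g u = 0" if "u \<in> U" for u
      using that R left g_real by (auto simp: U_def)
    show "0 islimpt U"
      unfolding islimpt_approachable
    proof (intro allI impI)
      fix \<epsilon> :: real assume "\<epsilon> > 0"
      define t where "t = - min (\<epsilon>/2) (min \<delta> R / 2)"
      have t: "t \<in> {- min \<delta> R<..<0}" "\<bar>t\<bar> < \<epsilon>"
        using \<open>\<epsilon> > 0\<close> \<open>\<delta> > 0\<close> R by (auto simp: t_def)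
      then show "\<exists>u\<in>U. u \<noteq> 0 \<and> dist u 0 < \<epsilon>"
        by (intro bexI[of _ "complex_of_real t"]) (auto simp: U_def)
    qed
  qed (use that in auto)
  show ?thesis
  proof
    show "\<psi> x = 0" if "\<bar>x - x0\<bar> < R" for x
      using g_real[of "x - x0"] g0[of "complex_of_real (x - x0)"] that R by (simp del: of_real_diff)
  qed (use R in auto)
qed

lemma smooth_step_not_real_analytic:
  assumes "1/2 \<in> A"
  shows "\<not> real_analytic_on A (\<lambda>x. complex_of_real (smooth_step x))"
proof
  assume analytic: "real_analytic_on A (\<lambda>x. complex_of_real (smooth_step x))"
  have left: "complex_of_real (smooth_step x) = 0" if "1/2 - 1 < x" "x < 1/2" for x
    using that by (simp add: smooth_step_eq_0)
  obtain r where "r > 0" and "\<And>x. \<bar>x - 1/2\<bar> < r \<Longrightarrow> complex_of_real (smooth_step x) = 0"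
    using real_analytic_on_vanishing_left[OF analytic assms zero_less_one left] by blast
  then have "smooth_step (1/2 + r/2) = 0"
    by simp
  with \<open>r > 0\<close> smooth_step_pos[of "1/2 + r/2"] show False
    by simp
qed

lemma open_interval_gt2_example: "open_interval_gt2 {0<..<201/100}"
  unfolding open_interval_gt2_def
proof (intro conjI)
  show "is_interval {0<..<201/100::real}"
    by (simp add: is_interval_def)
  show "\<exists>x\<in>{0<..<201/100}. \<exists>y\<in>{0<..<201/100}. y - x > (2::real)"
    by (rule bexI[of _ "1/1000"], rule bexI[of _ "2005/1000"]) auto
qed auto

theorem mainTheorem6:
  shows "\<exists>(A :: real set) (\<psi> :: real \<Rightarrow> complex).
           open_interval_gt2 A \<and> smooth_on_real A \<psi> \<and>
           regular_supershift A \<psi> \<and> \<not> real_analytic_on A \<psi>"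
proof (intro exI conjI)
  let ?\<psi> = "\<lambda>x. complex_of_real (smooth_step x)"
  show "open_interval_gt2 {0<..<201/100}"
    by (rule open_interval_gt2_example)
  show "smooth_on_real {0<..<201/100} ?\<psi>"
    by (rule flat_algebra_smooth_on[OF smooth_step_in_flat_algebra])
  have "continuous_on {0<..<201/100} smooth_step"
    by (rule flat_algebra_continuous_on[OF smooth_step_in_flat_algebra])
  then show "regular_supershift {0<..<201/100} ?\<psi>"
    by (intro regular_supershiftI continuous_on_of_real smooth_step_S_eps_uniform)
  show "\<not> real_analytic_on {0<..<201/100} ?\<psi>"
    by (rule smooth_step_not_real_analytic) simp
qed

end
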